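(* In the Dynamic Accountable Storage construction described in the context, with the server's IBLT tree built on the protected Cartesian tree, space usage is $O(\delta)$ at the client and $O(n+\delta n/\beta)$ at the server, where $n$ is the number of stored blocks.
   Context: The client stores $n$ key-block pairs at a server. The client keeps only an IBLT (Invertible Bloom Lookup Table: a table of $O(\delta)$ cells holding XOR-sums of keys, blocks and tags) of all her key-block-tag triples (her keys themselves are not counted). The server stores the $n$ key-block-tag triples and an IBLT tree: a protected Cartesian tree on the keys, in which each node stores an IBLT with $O(\delta)$ cells of all triples in its subtree. Protected Cartesian tree with parameter $\beta$: let $h'$ be a random hash from keys to $[0,1]$; for a set $S$ of $n'$ triples, the protected region $P(S)$ consists of elements whose rank (number of smaller keys in $S$) is $\le\beta/2$ or $>n'-\beta/2$, and $U(S)=S\setminus P(S)$; if $|S|\le\beta$ the tree is a single leaf holding $S$, otherwise the root pivot is the element of $U(S)$ with smallest $h'$ value and the subtrees are built recursively on the elements with smaller and larger keys. *)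

theory Defs
  imports Complex_Main
begin

text \<open>Keys are drawn from a linear order;
each stored key represents one key-block-tag triple (one unit of space).
An IBLT with c cells occupies c units of space.\<close>

datatype 'k ptree = Leaf "'k set" | Node "'k ptree" 'k "'k ptree"

definition krank :: "'k::linorder set \<Rightarrow> 'k \<Rightarrow> nat" where
  "krank S x = card {y \<in> S. y < x}"

definition protected_region :: "nat \<Rightarrow> 'k::linorder set \<Rightarrow> 'k set" where
  "protected_region \<beta> S = {x \<in> S. real (krank S x) \<le> real \<beta> / 2
       \<or> real (krank S x) > real (card S) - real \<beta> / 2}"

definition unprotected_region :: "nat \<Rightarrow> 'k::linorder set \<Rightarrow> 'k set" where
  "unprotected_region \<beta> S = S - protected_region \<beta> S"

lemma unprotected_subset: "unprotected_region \<beta> S \<subseteq> S"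
  unfolding unprotected_region_def by blast

function build_pct :: "nat \<Rightarrow> ('k::linorder \<Rightarrow> real) \<Rightarrow> 'k set \<Rightarrow> 'k ptree" where
  "build_pct \<beta> h S =
    (if \<not> finite S \<or> card S \<le> \<beta> \<or> unprotected_region \<beta> S = {} then Leaf S
     else (let p = arg_min_on h (unprotected_region \<beta> S) in
           Node (build_pct \<beta> h {x \<in> S. x < p}) p (build_pct \<beta> h {x \<in> S. p < x})))"
  by pat_completeness auto
termination
proof (relation "measure (\<lambda>(\<beta>, h, S). card S)", goal_cases)
  case 1 then show ?case by simp
next
  case (2 \<beta> h S p)
  have U: "finite (unprotected_region \<beta> S)"
    using 2 finite_subset[OF unprotected_subset] by blast
  have "p \<in> S" using 2 arg_min_if_finite(1)[OF U] unprotected_subset by blast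
  then have "{x \<in> S. x < p} \<subset> S" by auto
  then show ?case using 2 by (simp add: psubset_card_mono)
next
  case (3 \<beta> h S p)
  have U: "finite (unprotected_region \<beta> S)"
    using 3 finite_subset[OF unprotected_subset] by blast
  have "p \<in> S" using 3 arg_min_if_finite(1)[OF U] unprotected_subset by blast
  then have "{x \<in> S. p < x} \<subset> S" by auto
  then show ?case using 3 by (simp add: psubset_card_mono)
qed

text \<open>Space of the IBLT tree: every node (internal or leaf) stores an IBLT
with c cells; an internal node additionally stores its pivot, a leaf the
triples it holds.\<close>

fun iblt_tree_space :: "nat \<Rightarrow> 'k ptree \<Rightarrow> nat" where
  "iblt_tree_space c (Leaf A) = c + card A"
| "iblt_tree_space c (Node l p r) = c + 1 + iblt_tree_space c l + iblt_tree_space c r"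

text \<open>Server: the n triples plus the IBLT tree.  Client: one IBLT.\<close>

definition server_space :: "nat \<Rightarrow> nat \<Rightarrow> ('k::linorder \<Rightarrow> real) \<Rightarrow> 'k set \<Rightarrow> nat" where
  "server_space c \<beta> h S = card S + iblt_tree_space c (build_pct \<beta> h S)"

definition client_space :: "nat \<Rightarrow> nat" where
  "client_space c = c"

end

theory Submission
  imports Defs
begin

text \<open>The pivot of every internal node of a protected Cartesian tree lies outside the
protected region, so both of its subtrees receive at least about \<open>\<beta>/2\<close> keys.  Hence a
tree on \<open>n\<close> keys has \<open>O(n/\<beta>)\<close> leaves and as many internal nodes, each carrying an
IBLT of \<open>O(\<delta>)\<close> cells, while every triple is stored exactly once, as a pivot or in a
leaf.  The argument is deterministic: it holds for every priority function \<open>h\<close>.\<close>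

declare build_pct.simps[simp del]

fun inner_nodes :: "'k ptree \<Rightarrow> nat" where
  "inner_nodes (Leaf A) = 0"
| "inner_nodes (Node l p r) = inner_nodes l + 1 + inner_nodes r"

fun stored_keys :: "'k ptree \<Rightarrow> nat" where
  "stored_keys (Leaf A) = card A"
| "stored_keys (Node l p r) = stored_keys l + 1 + stored_keys r"

lemma iblt_tree_space_eq:
  "iblt_tree_space c t = c * (2 * inner_nodes t + 1) + stored_keys t"
  by (induction t) (simp_all add: algebra_simps)

lemma card_split_at:
  fixes p :: "'a::linorder"
  assumes "finite S" "p \<in> S"
  shows "card S = card {x \<in> S. x < p} + 1 + card {x \<in> S. p < x}"
proof -
  have "S = insert p ({x \<in> S. x < p} \<union> {x \<in> S. p < x})"
    using assms(2) by auto
  also have "card \<dots> = Suc (card ({x \<in> S. x < p} \<union> {x \<in> S. p < x}))"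
    using assms(1) by (intro card_insert_disjoint) auto
  also have "card ({x \<in> S. x < p} \<union> {x \<in> S. p < x}) = card {x \<in> S. x < p} + card {x \<in> S. p < x}"
    using assms(1) by (intro card_Un_disjoint) auto
  finally show ?thesis by simp
qed

lemma unprotected_region_krank:
  assumes "x \<in> unprotected_region \<beta> S"
  shows "\<beta> < 2 * krank S x" "2 * krank S x + \<beta> \<le> 2 * card S"
  using assms unfolding unprotected_region_def protected_region_def by auto

lemma build_pct_induct [case_names leaf node]:
  fixes h :: "'k::linorder \<Rightarrow> real"
  assumes leaf: "\<And>S. build_pct \<beta> h S = Leaf S \<Longrightarrow> P S"
    and node: "\<And>S p. finite S \<Longrightarrow> p \<in> S \<Longrightarrow>
      \<beta> < 2 * card {x \<in> S. x < p} \<Longrightarrow> 2 * card {x \<in> S. x < p} + \<beta> \<le> 2 * card S \<Longrightarrow>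
      build_pct \<beta> h S = Node (build_pct \<beta> h {x \<in> S. x < p}) p (build_pct \<beta> h {x \<in> S. p < x}) \<Longrightarrow>
      P {x \<in> S. x < p} \<Longrightarrow> P {x \<in> S. p < x} \<Longrightarrow> P S"
  shows "P S"
proof (induction "card S" arbitrary: S rule: less_induct)
  case less
  show ?case
  proof (cases "\<not> finite S \<or> card S \<le> \<beta> \<or> unprotected_region \<beta> S = {}")
    case True
    then show ?thesis
      using leaf build_pct.simps[of \<beta> h S] by simp
  next
    case False
    define p where "p = arg_min_on h (unprotected_region \<beta> S)"
    have "finite (unprotected_region \<beta> S)"
      using False finite_subset[OF unprotected_subset] by blast
    then have p_unprotected: "p \<in> unprotected_region \<beta> S"
      using False arg_min_if_finite(1) p_def by blast
    then have "p \<in> S"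
      using unprotected_subset by blast
    have split: "card S = card {x \<in> S. x < p} + 1 + card {x \<in> S. p < x}"
      using False \<open>p \<in> S\<close> card_split_at by blast
    show ?thesis
    proof (rule node)
      show "finite S" using False by blast
      show "p \<in> S" by fact
      show "\<beta> < 2 * card {x \<in> S. x < p}" "2 * card {x \<in> S. x < p} + \<beta> \<le> 2 * card S"
        using unprotected_region_krank[OF p_unprotected] unfolding krank_def by auto
      show "build_pct \<beta> h S =
          Node (build_pct \<beta> h {x \<in> S. x < p}) p (build_pct \<beta> h {x \<in> S. p < x})"
        using False by (subst build_pct.simps) (simp add: p_def Let_def)
      show "P {x \<in> S. x < p}" "P {x \<in> S. p < x}"
        using split by (simp_all add: less)
    qed
  qed
qed

lemma stored_keys_build_pct: "stored_keys (build_pct \<beta> h S) = card S"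
proof (induction S rule: build_pct_induct[where \<beta> = \<beta> and h = h])
  case (leaf S)
  then show ?case by simp
next
  case (node S p)
  then show ?case using card_split_at[of S p] by simp
qed

text \<open>The left-hand side is \<open>\<beta>\<close> times the number of leaves.  Counting \<open>card S + 1\<close>
makes the bound additive over a split, the pivot supplying the extra unit.\<close>

lemma inner_nodes_build_pct_le:
  "\<beta> * (inner_nodes (build_pct \<beta> h S) + 1) \<le> max \<beta> (2 * (card S + 1))"
proof (induction S rule: build_pct_induct[where \<beta> = \<beta> and h = h])
  case (leaf S)
  then show ?case by simp
next
  case (node S p)
  have "card S = card {x \<in> S. x < p} + 1 + card {x \<in> S. p < x}"
    using card_split_at node(1,2) .
  with node show ?case by (simp add: algebra_simps max_def split: if_splits)
qed

lemma server_space_le: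
  assumes "1 \<le> \<beta>" "\<beta> \<le> card S"
  shows "real (server_space c \<beta> h S) \<le> 2 * real (card S) + 8 * real c * real (card S) / real \<beta>"
proof -
  define I where "I = inner_nodes (build_pct \<beta> h S)"
  have "\<beta> * (I + 1) \<le> 4 * card S"
    using inner_nodes_build_pct_le[of \<beta> h S] assms unfolding I_def by simp
  then have "\<beta> * (2 * I + 1) \<le> 8 * card S"
    by (simp add: algebra_simps)
  then have "real \<beta> * (2 * real I + 1) \<le> 8 * real (card S)"
    by (metis of_nat_le_iff of_nat_mult of_nat_Suc of_nat_numeral Suc_eq_plus1 add.commute)
  then have "2 * real I + 1 \<le> 8 * real (card S) / real \<beta>"
    using assms(1) by (simp add: field_simps)
  then have "real c * (2 * real I + 1) \<le> real c * (8 * real (card S) / real \<beta>)"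
    by (rule mult_left_mono) simp
  moreover have "server_space c \<beta> h S = 2 * card S + c * (2 * I + 1)"
    unfolding server_space_def iblt_tree_space_eq stored_keys_build_pct I_def by simp
  ultimately show ?thesis by (simp add: algebra_simps)
qed

theorem lemma4:
  fixes ncells :: "nat \<Rightarrow> nat" and K :: nat
  assumes iblt_size: "\<forall>\<delta>\<ge>1. ncells \<delta> \<le> K * \<delta>"
  shows "\<exists>C::real. C > 0 \<and>
    (\<forall>\<delta>::nat\<ge>1. real (client_space (ncells \<delta>)) \<le> C * real \<delta>) \<and>
    (\<forall>\<delta>::nat\<ge>1. \<forall>\<beta>::nat\<ge>1. \<forall>h::'k::linorder \<Rightarrow> real. (\<forall>x. h x \<in> {0..1}) \<longrightarrow>
       (\<forall>\<^sub>F n in sequentially. \<forall>S::'k set. finite S \<and> card S = n \<longrightarrow>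
          real (server_space (ncells \<delta>) \<beta> h S)
            \<le> C * (real n + real \<delta> * real n / real \<beta>)))"
proof (rule exI[of _ "8 * real K + 2"], intro conjI allI impI)
  have cells: "real (ncells \<delta>) \<le> real K * real \<delta>" if "\<delta> \<ge> 1" for \<delta>
    using iblt_size that of_nat_mono by fastforce
  show "8 * real K + 2 > 0" by simp
  show "real (client_space (ncells \<delta>)) \<le> (8 * real K + 2) * real \<delta>" if "\<delta> \<ge> 1" for \<delta>
    using cells[OF that] unfolding client_space_def by (simp add: algebra_simps)
  fix \<delta> \<beta> :: nat and h :: "'k \<Rightarrow> real"
  assume "\<delta> \<ge> 1" "\<beta> \<ge> 1"
  have "real (server_space (ncells \<delta>) \<beta> h S) \<le> (8 * real K + 2) * (real n + real \<delta> * real n / real \<beta>)"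
    if "n \<ge> \<beta>" "card S = n" for n and S :: "'k set"
  proof -
    define q where "q = real n / real \<beta>"
    have "real (server_space (ncells \<delta>) \<beta> h S) \<le> 2 * real n + 8 * (real (ncells \<delta>) * q)"
      using server_space_le[of \<beta> S "ncells \<delta>" h] that \<open>\<beta> \<ge> 1\<close> by (simp add: q_def)
    also have "\<dots> \<le> 2 * real n + 8 * (real K * real \<delta> * q)"
      using mult_right_mono[OF cells[OF \<open>\<delta> \<ge> 1\<close>], of q] by (simp add: q_def)
    also have "\<dots> \<le> (8 * real K + 2) * (real n + real \<delta> * q)"
      by (simp add: q_def algebra_simps)
    finally show ?thesis by (simp add: q_def)
  qed
  then show "\<forall>\<^sub>F n in sequentially. \<forall>S::'k set. finite S \<and> card S = n \<longrightarrow>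
      real (server_space (ncells \<delta>) \<beta> h S) \<le> (8 * real K + 2) * (real n + real \<delta> * real n / real \<beta>)"
    unfolding eventually_sequentially by blast
qed

end
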